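(* Let $c(t)=\sum_{n\ge0}c_nt^n\in\mathbb Q[h,\beta,\gamma][[t]]$. Then $$\Big(1-\frac\beta4t^2\Big)^2\frac{d}{dt}c(t)=(c(t)-1)\Big(h\Big(1-\frac\beta4t^2\Big)-\gamma\frac{t^2}2\Big).$$
   Context: $h,\beta,\gamma$ are formal variables. The $c_n\in\mathbb Q[h,\beta,\gamma]$ are defined by $c_0=2$ and, for $n\ge1$, by $\log\big(1+\sum_{n\ge1}c_nt^n\big)=\sum_{m\ge1}(-1)^{m-1}(m-1)!\,\mathrm{ch}_mt^m$, where $\mathrm{ch}_1=h$, $\mathrm{ch}_{2n}=0$, and $\mathrm{ch}_{2n-1}=\frac1{(2n-1)!}\big(\frac{\beta h}4-\frac{n-1}2\gamma\big)\big(\frac\beta4\big)^{n-2}$ for $n\ge2$ (i.e. $1+\sum_{n\ge1}c_nt^n$ is the total Chern polynomial of a virtual class with Chern character components $\mathrm{ch}_m$). *)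

theory Defs
  imports "HOL-Computational_Algebra.Formal_Power_Series"
begin

text \<open>The Chern character components ch_m. The formal variables h, beta, gamma are
  modelled as arbitrary elements of an arbitrary field of characteristic 0
  (e.g. the fraction field of Q[h,beta,gamma]).\<close>
definition ch :: "'a::field_char_0 \<Rightarrow> 'a \<Rightarrow> 'a \<Rightarrow> nat \<Rightarrow> 'a" where
  "ch h \<beta> \<gamma> m =
     (if m = 0 then 0
      else if m = 1 then h
      else if even m then 0
      else (let n = (m + 1) div 2 in
              (1 / fact (2*n - 1)) * (\<beta> * h / 4 - (of_nat n - 1) / 2 * \<gamma>) * (\<beta> / 4) ^ (n - 2)))"

definition chlog :: "'a::field_char_0 \<Rightarrow> 'a \<Rightarrow> 'a \<Rightarrow> 'a fps" where
  "chlog h \<beta> \<gamma> = Abs_fps (\<lambda>m. if m = 0 then 0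
                                 else (-1) ^ (m - 1) * fact (m - 1) * ch h \<beta> \<gamma> m)"

text \<open>The series S = sum_{n>=1} c_n t^n, characterised by log(1 + S) = chlog,
  where log(1+S) is the composition of log(1+X) (= fps_ln 1) with S.\<close>
definition cS :: "'a::field_char_0 \<Rightarrow> 'a \<Rightarrow> 'a \<Rightarrow> 'a fps" where
  "cS h \<beta> \<gamma> = (THE S. fps_nth S 0 = 0 \<and> fps_ln 1 oo S = chlog h \<beta> \<gamma>)"

definition cser :: "'a::field_char_0 \<Rightarrow> 'a \<Rightarrow> 'a \<Rightarrow> 'a fps" where
  "cser h \<beta> \<gamma> = Abs_fps (\<lambda>n. if n = 0 then 2 else fps_nth (cS h \<beta> \<gamma>) n)"

end

theory Submission
  imports Defs
begin

unbundle fps_syntax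

text \<open>Write \<open>c = 2 + S\<close> and \<open>L = log (1 + S)\<close>. The logarithmic derivative gives
  \<open>S' = (1 + S) L'\<close>, so with \<open>a = \<beta> / 4\<close> it suffices that
  \<open>(1 - a t\<^sup>2)\<^sup>2 L' = h (1 - a t\<^sup>2) - \<gamma> t\<^sup>2 / 2\<close>. Only the odd \<open>ch\<^sub>m\<close> survive, so \<open>L'\<close> is even,
  with coefficient \<open>(a h - j \<gamma> / 2) a^(j - 1)\<close> at \<open>t^(2 j)\<close> for \<open>j \<ge> 1\<close>; that is,
  \<open>L' = h / (1 - a t\<^sup>2) - (\<gamma> / 2) t\<^sup>2 / (1 - a t\<^sup>2)\<^sup>2\<close>.\<close>

lemma fps_ln_compose_eq_iff:
  fixes S L :: "'a::field_char_0 fps"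
  assumes "S $ 0 = 0" "L $ 0 = 0"
  shows "fps_ln 1 oo S = L \<longleftrightarrow> S = (fps_exp 1 - 1) oo L"
proof -
  define E :: "'a fps" where "E = fps_exp 1 - 1"
  have E0: "E $ 0 = 0" and E1: "E $ 1 \<noteq> 0" by (simp_all add: E_def)
  have ln: "fps_ln 1 = fps_inv E"
    unfolding E_def by (rule fps_ln_fps_exp_inv) simp
  have "fps_ln 1 oo (E oo L) = L"
    using E0 assms(2) by (simp add: ln fps_compose_assoc fps_inv[OF E0 E1])
  moreover have "E oo (fps_ln 1 oo S) = S"
  proof -
    have "E oo (fps_inv E oo S) = (E oo fps_inv E) oo S"
      using assms(1) by (simp add: fps_compose_assoc fps_inv_def)
    then show ?thesis using assms(1) by (simp add: ln fps_inv_right[OF E0 E1])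
  qed
  ultimately show ?thesis unfolding E_def by auto
qed

lemma cS_spec:
  fixes h \<beta> \<gamma> :: "'a::field_char_0"
  shows "cS h \<beta> \<gamma> $ 0 = 0" and "fps_ln 1 oo cS h \<beta> \<gamma> = chlog h \<beta> \<gamma>"
proof -
  define E :: "'a fps" where "E = fps_exp 1 - 1"
  have L0: "chlog h \<beta> \<gamma> $ 0 = 0" by (simp add: chlog_def)
  have E0: "(E oo chlog h \<beta> \<gamma>) $ 0 = 0" by (simp add: E_def)
  have "(THE S. S $ 0 = 0 \<and> fps_ln 1 oo S = chlog h \<beta> \<gamma>) = E oo chlog h \<beta> \<gamma>"
    using E0 fps_ln_compose_eq_iff[OF _ L0] unfolding E_def by (intro the_equality) auto
  then have "cS h \<beta> \<gamma> = E oo chlog h \<beta> \<gamma>" by (simp add: cS_def)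
  then show "cS h \<beta> \<gamma> $ 0 = 0" and "fps_ln 1 oo cS h \<beta> \<gamma> = chlog h \<beta> \<gamma>"
    using E0 fps_ln_compose_eq_iff[OF _ L0] unfolding E_def by auto
qed

lemma cser_eq_2_plus_cS: "cser h \<beta> \<gamma> = 2 + cS h \<beta> \<gamma>"
  by (rule fps_ext) (simp add: cser_def cS_spec(1) numeral_fps_const)

lemma fps_deriv_of_fps_ln_compose:
  fixes S :: "'a::field_char_0 fps"
  assumes "S $ 0 = 0"
  shows "fps_deriv S = (1 + S) * fps_deriv (fps_ln 1 oo S)"
proof -
  have "(1 + S) * (inverse (1 + fps_X) oo S) = ((1 + fps_X) * inverse (1 + fps_X)) oo S"
    using assms by (simp add: fps_compose_mult_distrib fps_compose_add_distrib)
  also have "\<dots> = 1" by (simp add: inverse_mult_eq_1')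
  finally have "(1 + S) * (inverse (1 + fps_X) oo S) = 1" .
  then show ?thesis
    using assms by (simp add: fps_compose_deriv fps_ln_deriv mult.assoc[symmetric])
qed

definition chlog_deriv_coeff :: "'a::field_char_0 \<Rightarrow> 'a \<Rightarrow> 'a \<Rightarrow> nat \<Rightarrow> 'a" where
  "chlog_deriv_coeff h \<beta> \<gamma> k =
     (if odd k then 0 else if k = 0 then h
      else (\<beta> * h / 4 - of_nat (k div 2) * \<gamma> / 2) * (\<beta> / 4) ^ (k div 2 - 1))"

lemma fps_deriv_chlog:
  fixes h \<beta> \<gamma> :: "'a::field_char_0"
  shows "fps_deriv (chlog h \<beta> \<gamma>) = Abs_fps (chlog_deriv_coeff h \<beta> \<gamma>)"
proof (rule fps_ext)
  fix k
  show "fps_deriv (chlog h \<beta> \<gamma>) $ k = Abs_fps (chlog_deriv_coeff h \<beta> \<gamma>) $ k"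
  proof (cases "odd k")
    case True
    then have "k \<noteq> 0" by presburger
    with True show ?thesis by (simp add: chlog_def ch_def chlog_deriv_coeff_def)
  next
    case False
    then obtain j where k: "k = 2 * j" by (auto elim: evenE)
    define A where "A = (\<beta> * h / 4 - of_nat j * \<gamma> / 2) * (\<beta> / 4) ^ (j - 1)"
    have "(2 * j + 1 + 1) div 2 = j + 1" by simp
    then have "j \<noteq> 0 \<Longrightarrow> ch h \<beta> \<gamma> (Suc (2 * j)) = A / fact (2 * j + 1)"
      by (simp add: ch_def A_def Let_def)
    moreover have "(fact (2 * j + 1) :: 'a) = of_nat (2 * j + 1) * fact (2 * j)"
      by (simp add: fact_Suc)
    moreover have "(1 + 2 * of_nat j :: 'a) \<noteq> 0"
      using of_nat_neq_0[of "2 * j"] by simp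
    ultimately show ?thesis
      using k by (cases "j = 0") (simp_all add: chlog_def ch_def chlog_deriv_coeff_def A_def)
  qed
qed

lemma fps_const_X2_mult_nth:
  fixes a :: "'a::comm_ring_1"
  shows "(fps_const a * fps_X ^ 2 * D) $ n = (if n < 2 then 0 else a * D $ (n - 2))"
  by (simp add: mult.assoc fps_X_power_mult_nth)

lemma one_minus_const_X2_squared_mult_nth:
  fixes a :: "'a::comm_ring_1"
  shows "((1 - fps_const a * fps_X ^ 2) ^ 2 * D) $ n
    = D $ n - 2 * (if n < 2 then 0 else a * D $ (n - 2))
        + (if n < 4 then 0 else a ^ 2 * D $ (n - 4))"
proof -
  define u where "u = fps_const a * fps_X ^ 2"
  have "(1 - u) ^ 2 * D = D - 2 * (u * D) + u * (u * D)"
    by (simp add: power2_eq_square algebra_simps)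
  moreover have "(u * f) $ n = (if n < 2 then 0 else a * f $ (n - 2))" for f n
    unfolding u_def by (rule fps_const_X2_mult_nth)
  moreover have "(2 * f) $ n = 2 * f $ n" for f :: "'a fps"
    by (simp add: numeral_fps_const)
  ultimately show ?thesis
    unfolding u_def[symmetric] by (auto simp add: power2_eq_square)
qed

lemma arith_geom_second_difference:
  fixes a b g :: "'a::comm_ring_1"
  shows "(b - of_nat (k + 2) * g) * a ^ (k + 2) - 2 * a * ((b - of_nat (k + 1) * g) * a ^ (k + 1))
     + a ^ 2 * ((b - of_nat k * g) * a ^ k) = 0"
  by (simp add: power_add power2_eq_square algebra_simps)

lemma one_minus_const_X2_squared_mult_fps_deriv_chlog:
  fixes h \<beta> \<gamma> :: "'a::field_char_0"
  shows "(1 - fps_const (\<beta> / 4) * fps_X ^ 2) ^ 2 * fps_deriv (chlog h \<beta> \<gamma>)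
       = fps_const h * (1 - fps_const (\<beta> / 4) * fps_X ^ 2) - fps_const (\<gamma> / 2) * fps_X ^ 2"
proof (rule fps_ext)
  fix n
  define D where "D = fps_deriv (chlog h \<beta> \<gamma>)"
  have D_nth: "D $ k = chlog_deriv_coeff h \<beta> \<gamma> k" for k
    by (simp add: D_def fps_deriv_chlog)
  have rhs: "(fps_const h * (1 - fps_const (\<beta> / 4) * fps_X ^ 2) - fps_const (\<gamma> / 2) * fps_X ^ 2) $ n
      = (if n = 0 then h else if n = 2 then - h * \<beta> / 4 - \<gamma> / 2 else 0)"
    by (simp add: algebra_simps fps_X_power_nth)
  have "D $ n - 2 * (if n < 2 then 0 else \<beta> / 4 * D $ (n - 2))
          + (if n < 4 then 0 else (\<beta> / 4) ^ 2 * D $ (n - 4))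
      = (if n = 0 then h else if n = 2 then - h * \<beta> / 4 - \<gamma> / 2 else 0)"
  proof (cases "n < 4")
    case True
    then consider "n = 0" | "n = 1" | "n = 2" | "n = 3" by linarith
    then show ?thesis by cases (simp_all add: D_nth chlog_deriv_coeff_def field_simps)
  next
    case False
    then obtain m where n: "n = m + 4" by (metis add.commute le_Suc_ex not_less)
    show ?thesis
    proof (cases "odd m")
      case True
      then show ?thesis using n by (simp add: D_nth chlog_deriv_coeff_def)
    next
      case False
      then obtain j where "m = 2 * j" by (auto elim: evenE)
      then have idx: "n div 2 = j + 2" "n - 2 = 2 * (j + 1)" "n - 4 = 2 * j"
        using n by auto
      show ?thesis
      proof (cases j)
        case 0
        then show ?thesis
          using n idx by (simp add: D_nth chlog_deriv_coeff_def power2_eq_square field_simps)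
      next
        case (Suc i)
        then show ?thesis
          using n idx arith_geom_second_difference[of "\<beta> * h / 4 - \<gamma> / 2" i "\<gamma> / 2" "\<beta> / 4"]
          by (simp add: D_nth chlog_deriv_coeff_def algebra_simps add_divide_distrib)
      qed
    qed
  qed
  then show "((1 - fps_const (\<beta> / 4) * fps_X ^ 2) ^ 2 * fps_deriv (chlog h \<beta> \<gamma>)) $ n
      = (fps_const h * (1 - fps_const (\<beta> / 4) * fps_X ^ 2) - fps_const (\<gamma> / 2) * fps_X ^ 2) $ n"
    unfolding rhs one_minus_const_X2_squared_mult_nth D_def .
qed

theorem lemma4p1:
  fixes h \<beta> \<gamma> :: "'a::field_char_0"
  shows "(1 - fps_const (\<beta> / 4) * fps_X ^ 2) ^ 2 * fps_deriv (cser h \<beta> \<gamma>)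
         = (cser h \<beta> \<gamma> - 1) *
           (fps_const h * (1 - fps_const (\<beta> / 4) * fps_X ^ 2) - fps_const (\<gamma> / 2) * fps_X ^ 2)"
proof -
  define S where "S = cS h \<beta> \<gamma>"
  define Q :: "'a fps" where "Q = (1 - fps_const (\<beta> / 4) * fps_X ^ 2) ^ 2"
  have "fps_deriv S = (1 + S) * fps_deriv (chlog h \<beta> \<gamma>)"
    unfolding S_def cS_spec(2)[of h \<beta> \<gamma>, symmetric]
    by (rule fps_deriv_of_fps_ln_compose[OF cS_spec(1)])
  moreover have "cser h \<beta> \<gamma> = 2 + S" "(2 :: 'a fps) - 1 = 1"
    by (simp_all add: S_def cser_eq_2_plus_cS)
  ultimately have
    "Q * fps_deriv (cser h \<beta> \<gamma>) = (cser h \<beta> \<gamma> - 1) * (Q * fps_deriv (chlog h \<beta> \<gamma>))"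
    by (simp add: algebra_simps)
  then show ?thesis
    unfolding Q_def one_minus_const_X2_squared_mult_fps_deriv_chlog .
qed

end
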